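(* Let $\psi:M_n\to M_m$ be $k$-partially entanglement breaking. If $\mathcal T$ is any operator system and $\phi:\mathcal T\to M_n$ is $k$-positive, then $\psi\circ\phi$ is completely positive.
   Context: A linear map $\phi$ is $k$-positive if $\mathrm{id}_k\otimes\phi$ is positive, completely positive if $k$-positive for all $k$. A map $\psi:M_n\to M_m$ is $k$-partially entanglement breaking ($k$-PEB) if $\psi\circ\phi$ is completely positive for every $k$-positive map $\phi:M_d\to M_n$, for every $d\ge1$. *)

theory Defs
  imports Complex_Main "Jordan_Normal_Form.Matrix"
begin

definition psd :: "complex mat \<Rightarrow> bool" where
  "psd A \<longleftrightarrow> A \<in> carrier_mat (dim_row A) (dim_row A) \<and>
     (\<forall>v \<in> carrier_vec (dim_row A).
        (let q = (\<Sum>i<dim_row A. \<Sum>j<dim_row A. cnj (v $ i) * A $$ (i, j) * v $ j)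
         in Im q = 0 \<and> 0 \<le> Re q))"

definition ampl :: "nat \<Rightarrow> nat \<Rightarrow> (nat \<Rightarrow> nat \<Rightarrow> complex mat) \<Rightarrow> complex mat" where
  "ampl k n B = mat (k * n) (k * n)
     (\<lambda>(r, c). B (r div n) (c div n) $$ (r mod n, c mod n))"

definition blk :: "nat \<Rightarrow> complex mat \<Rightarrow> nat \<Rightarrow> nat \<Rightarrow> complex mat" where
  "blk d X i j = mat d d (\<lambda>(a, b). X $$ (i * d + a, j * d + b))"

definition lin_mat_map :: "nat \<Rightarrow> nat \<Rightarrow> (complex mat \<Rightarrow> complex mat) \<Rightarrow> bool" where
  "lin_mat_map d n \<phi> \<longleftrightarrow>
     (\<forall>A \<in> carrier_mat d d. \<phi> A \<in> carrier_mat n n) \<and>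
     (\<forall>A \<in> carrier_mat d d. \<forall>B \<in> carrier_mat d d. \<phi> (A + B) = \<phi> A + \<phi> B) \<and>
     (\<forall>A \<in> carrier_mat d d. \<forall>c. \<phi> (c \<cdot>\<^sub>m A) = c \<cdot>\<^sub>m \<phi> A)"

definition k_pos_mat :: "nat \<Rightarrow> nat \<Rightarrow> nat \<Rightarrow> (complex mat \<Rightarrow> complex mat) \<Rightarrow> bool" where
  "k_pos_mat k d n \<phi> \<longleftrightarrow>
     (\<forall>X \<in> carrier_mat (k * d) (k * d). psd X \<longrightarrow> psd (ampl k n (\<lambda>i j. \<phi> (blk d X i j))))"

definition k_PEB :: "nat \<Rightarrow> nat \<Rightarrow> nat \<Rightarrow> (complex mat \<Rightarrow> complex mat) \<Rightarrow> bool" where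
  "k_PEB k n m \<psi> \<longleftrightarrow> lin_mat_map n m \<psi> \<and>
     (\<forall>d \<ge> 1. \<forall>\<phi>. lin_mat_map d n \<phi> \<and> k_pos_mat k d n \<phi> \<longrightarrow>
        (\<forall>l. k_pos_mat l d m (\<psi> \<circ> \<phi>)))"

text \<open>Matrices over V: functions nat => nat => V supported on the l x l square;
  the entries (i,j) with i,j < l form an l x l matrix over V.\<close>
definition vmat :: "nat \<Rightarrow> (nat \<Rightarrow> nat \<Rightarrow> 'a::zero) set" where
  "vmat l = {X. \<forall>i j. (l \<le> i \<or> l \<le> j) \<longrightarrow> X i j = 0}"

definition herm :: "('a \<Rightarrow> 'a) \<Rightarrow> nat \<Rightarrow> (nat \<Rightarrow> nat \<Rightarrow> 'a::zero) set" where
  "herm star l = {X \<in> vmat l. \<forall>i<l. \<forall>j<l. X j i = star (X i j)}"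

definition shift :: "(complex \<Rightarrow> 'a \<Rightarrow> 'a) \<Rightarrow> 'a \<Rightarrow> nat \<Rightarrow> real \<Rightarrow> (nat \<Rightarrow> nat \<Rightarrow> 'a::ab_group_add)
    \<Rightarrow> (nat \<Rightarrow> nat \<Rightarrow> 'a)" where
  "shift smul e l r X = (\<lambda>i j. (if i = j \<and> i < l then smul (complex_of_real r) e else 0) + X i j)"

text \<open>Abstract operator system (Choi--Effros): a complex vector space V (scalar
  multiplication smul) with involution star, matrix cones C l \<subseteq> M_l(V)_h, and an
  Archimedean matrix order unit e.\<close>
definition operator_system ::
  "(complex \<Rightarrow> 'a \<Rightarrow> 'a) \<Rightarrow> ('a \<Rightarrow> 'a) \<Rightarrow> (nat \<Rightarrow> (nat \<Rightarrow> nat \<Rightarrow> 'a::ab_group_add) set) \<Rightarrow> 'a \<Rightarrow> bool"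
  where
  "operator_system smul star C e \<longleftrightarrow>
     vector_space smul \<and>
     (\<forall>x y. star (x + y) = star x + star y) \<and>
     (\<forall>c x. star (smul c x) = smul (cnj c) (star x)) \<and>
     (\<forall>x. star (star x) = x) \<and>
     (\<forall>l\<ge>1. C l \<subseteq> herm star l) \<and>
     (\<forall>l\<ge>1. \<forall>X\<in>C l. \<forall>Y\<in>C l. (\<lambda>i j. X i j + Y i j) \<in> C l) \<and>
     (\<forall>l\<ge>1. \<forall>X\<in>C l. \<forall>r::real. 0 \<le> r \<longrightarrow> (\<lambda>i j. smul (complex_of_real r) (X i j)) \<in> C l) \<and>
     (\<forall>l\<ge>1. \<forall>X\<in>C l. (\<lambda>i j. - X i j) \<in> C l \<longrightarrow> X = (\<lambda>i j. 0)) \<and>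
     (\<forall>p\<ge>1. \<forall>l\<ge>1. \<forall>X\<in>C p. \<forall>\<alpha>::nat \<Rightarrow> nat \<Rightarrow> complex.
        (\<lambda>i j. if i < l \<and> j < l
               then (\<Sum>a<p. \<Sum>b<p. smul (cnj (\<alpha> a i) * \<alpha> b j) (X a b)) else 0) \<in> C l) \<and>
     star e = e \<and>
     (\<forall>l\<ge>1. \<forall>X\<in>herm star l. \<exists>r>0. shift smul e l r X \<in> C l) \<and>
     (\<forall>l\<ge>1. \<forall>X\<in>herm star l. (\<forall>r>0. shift smul e l r X \<in> C l) \<longrightarrow> X \<in> C l)"

definition lin_os_map :: "(complex \<Rightarrow> 'a \<Rightarrow> 'a::ab_group_add) \<Rightarrow> nat \<Rightarrow> ('a \<Rightarrow> complex mat) \<Rightarrow> bool" where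
  "lin_os_map smul n \<phi> \<longleftrightarrow>
     (\<forall>x. \<phi> x \<in> carrier_mat n n) \<and>
     (\<forall>x y. \<phi> (x + y) = \<phi> x + \<phi> y) \<and>
     (\<forall>c x. \<phi> (smul c x) = c \<cdot>\<^sub>m \<phi> x)"

definition k_pos_os :: "(nat \<Rightarrow> (nat \<Rightarrow> nat \<Rightarrow> 'a) set) \<Rightarrow> nat \<Rightarrow> nat \<Rightarrow> ('a \<Rightarrow> complex mat) \<Rightarrow> bool" where
  "k_pos_os C k n \<phi> \<longleftrightarrow> (\<forall>X \<in> C k. psd (ampl k n (\<lambda>i j. \<phi> (X i j))))"

definition compl_pos_os :: "(nat \<Rightarrow> (nat \<Rightarrow> nat \<Rightarrow> 'a) set) \<Rightarrow> nat \<Rightarrow> ('a \<Rightarrow> complex mat) \<Rightarrow> bool" where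
  "compl_pos_os C n \<phi> \<longleftrightarrow> (\<forall>l. k_pos_os C l n \<phi>)"

end

theory Submission
  imports Defs
begin

text \<open>Every element X of the l-th matrix cone of the operator system induces the linear map
  A \<mapsto> \<Sum>_ab A_ab X_ab from M_l into the operator system. Writing a positive
  Y \<in> M_k(M_l) as a sum of rank-one matrices u u^*, its image under id_k \<otimes> (this map) is a sum of
  compressions of X and hence lies in the k-th cone. So composing with a k-positive \<phi> gives a
  k-positive map M_l \<rightarrow> M_n, which \<psi> turns into a completely positive one. Evaluating that map
  on the Choi matrix \<Sum> E_ij \<otimes> E_ij, whose blocks are sent back to the entries of X, shows that
  id_l \<otimes> (\<psi> \<circ> \<phi>) maps X to a positive matrix.\<close>

section \<open>Positive semidefinite matrices as functions\<close>

definition quad_form :: "nat \<Rightarrow> (nat \<Rightarrow> nat \<Rightarrow> complex) \<Rightarrow> (nat \<Rightarrow> complex) \<Rightarrow> complex" where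
  "quad_form N Y v = (\<Sum>i<N. \<Sum>j<N. cnj (v i) * Y i j * v j)"

definition psd_fun :: "nat \<Rightarrow> (nat \<Rightarrow> nat \<Rightarrow> complex) \<Rightarrow> bool" where
  "psd_fun N Y \<longleftrightarrow> (\<forall>v. Im (quad_form N Y v) = 0 \<and> 0 \<le> Re (quad_form N Y v))"

lemma psd_imp_psd_fun: "psd A \<Longrightarrow> psd_fun (dim_row A) (\<lambda>i j. A $$ (i, j))"
  unfolding psd_fun_def
proof
  fix v assume "psd A"
  then have "Im (quad_form (dim_row A) (\<lambda>i j. A $$ (i, j)) (\<lambda>i. vec (dim_row A) v $ i)) = 0 \<and>
      0 \<le> Re (quad_form (dim_row A) (\<lambda>i j. A $$ (i, j)) (\<lambda>i. vec (dim_row A) v $ i))"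
    unfolding psd_def Let_def quad_form_def by (meson vec_carrier)
  moreover have "quad_form (dim_row A) (\<lambda>i j. A $$ (i, j)) (\<lambda>i. vec (dim_row A) v $ i)
      = quad_form (dim_row A) (\<lambda>i j. A $$ (i, j)) v"
    unfolding quad_form_def by (intro sum.cong refl) simp
  ultimately show "Im (quad_form (dim_row A) (\<lambda>i j. A $$ (i, j)) v) = 0 \<and>
      0 \<le> Re (quad_form (dim_row A) (\<lambda>i j. A $$ (i, j)) v)"
    by simp
qed

lemma quad_form_extend:
  "quad_form (Suc N) Y (\<lambda>x. if x < N then v x else t) =
   quad_form N Y v + (\<Sum>i<N. cnj (v i) * Y i N) * t + cnj t * (\<Sum>j<N. Y N j * v j)
     + cnj t * Y N N * t"
proof -
  have "(\<Sum>i<N. \<Sum>j<Suc N. cnj (v i) * Y i j * (if j < N then v j else t))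
     = quad_form N Y v + (\<Sum>i<N. cnj (v i) * Y i N) * t"
    by (simp add: quad_form_def sum.distrib sum_distrib_right)
  moreover have "(\<Sum>j<Suc N. cnj t * Y N j * (if j < N then v j else t))
     = cnj t * (\<Sum>j<N. Y N j * v j) + cnj t * Y N N * t"
    by (simp add: sum_distrib_left mult.assoc)
  ultimately show ?thesis
    unfolding quad_form_def by (subst sum.lessThan_Suc) (simp add: algebra_simps)
qed

lemma sum_delta_left: "j < (N::nat) \<Longrightarrow> (\<Sum>i<N. cnj (if i = j then 1 else 0) * f i) = f j"
  by (subst sum.cong[OF refl, of _ _ "\<lambda>i. if i = j then f i else 0"]) auto

lemma sum_delta_right: "j < (N::nat) \<Longrightarrow> (\<Sum>i<N. (f i :: complex) * (if i = j then 1 else 0)) = f j"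
  by (subst sum.cong[OF refl, of _ _ "\<lambda>i. if i = j then f i else 0"]) auto

lemma quad_form_unit: "j < N \<Longrightarrow> quad_form N Y (\<lambda>x. if x = j then 1 else 0) = Y j j"
  unfolding quad_form_def
  by (simp add: if_distrib[of "\<lambda>x. x * _"] if_distrib[of "\<lambda>x. _ * x"] if_distrib[of cnj]
      cong: if_cong)

lemma quad_form_extend_unit:
  assumes "i < N"
  shows "quad_form (Suc N) Y (\<lambda>x. if x < N then (if x = i then 1 else 0) else t) =
    Y i i + Y i N * t + cnj t * Y N i + cnj t * Y N N * t"
  using quad_form_extend[of N Y "\<lambda>x. if x = i then 1 else 0" t] quad_form_unit[OF assms, of Y]
    sum_delta_left[OF assms, of "\<lambda>i. Y i N"] sum_delta_right[OF assms, of "\<lambda>j. Y N j"]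
  by simp

lemma psd_fun_diag:
  assumes "psd_fun N Y" and "i < N"
  shows "Im (Y i i) = 0 \<and> 0 \<le> Re (Y i i)"
  using assms(1)[unfolded psd_fun_def, rule_format, of "\<lambda>x. if x = i then 1 else 0"]
  unfolding quad_form_unit[OF assms(2)] .

lemma psd_fun_last_herm:
  assumes psd: "psd_fun (Suc N) Y" and i: "i < N"
  shows "Y i N = cnj (Y N i)"
proof -
  have diag: "Im (Y i i) = 0" "Im (Y N N) = 0"
    using psd_fun_diag[OF psd] i by auto
  have form: "Im (Y i i + Y i N * t + cnj t * Y N i + cnj t * Y N N * t) = 0" for t
    using psd[unfolded psd_fun_def, rule_format, of "\<lambda>x. if x < N then (if x = i then 1 else 0) else t"]
    unfolding quad_form_extend_unit[OF i] by (rule conjunct1)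
  have "Im (Y i N + Y N i) = 0" "Re (Y i N - Y N i) = 0"
    using form[of 1] form[of \<i>] diag by simp_all
  then show ?thesis by (simp add: complex_eq_iff)
qed

text \<open>If Y_Nj \<noteq> 0, the test vector e_j - r Y_Nj e_N has negative value for large r.\<close>
lemma psd_fun_last_row_zero:
  assumes psd: "psd_fun (Suc N) Y" and "Y N N = 0" and j: "j < N"
  shows "Y N j = 0"
proof (rule ccontr)
  define z where "z = Y N j"
  assume "Y N j \<noteq> 0"
  then have c_pos: "Re (cnj z * z) > 0"
    unfolding z_def
    by (simp add: mult.commute[of "cnj _"] complex_mult_cnj complex_eq_iff sum_power2_gt_zero_iff)
  define r where "r = (Re (Y j j) + 1) / (2 * Re (cnj z * z))"
  have "0 \<le> Re (quad_form (Suc N) Y (\<lambda>x. if x < N then (if x = j then 1 else 0) else - of_real r * z))"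
    using psd unfolding psd_fun_def by blast
  also have "quad_form (Suc N) Y (\<lambda>x. if x < N then (if x = j then 1 else 0) else - of_real r * z) =
      Y j j + cnj z * (- of_real r * z) + cnj (- of_real r * z) * z"
    using quad_form_extend_unit[OF j, of Y "- of_real r * z"] psd_fun_last_herm[OF psd j] assms(2)
    unfolding z_def by simp
  also have "Re (Y j j + cnj z * (- of_real r * z) + cnj (- of_real r * z) * z) = -1"
    using c_pos unfolding r_def by (simp add: algebra_simps) (simp add: field_simps)
  finally show False by simp
qed

definition schur_compl :: "nat \<Rightarrow> (nat \<Rightarrow> nat \<Rightarrow> complex) \<Rightarrow> nat \<Rightarrow> nat \<Rightarrow> complex" where
  "schur_compl N Y i j = Y i j - Y i N * Y N j / Y N N"

lemma psd_fun_schur_compl: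
  assumes psd: "psd_fun (Suc N) Y"
  shows "psd_fun N (schur_compl N Y)"
  unfolding psd_fun_def
proof
  fix v
  define P where "P = Y N N"
  define s where "s = (\<Sum>j<N. Y N j * v j)"
  have col: "(\<Sum>i<N. cnj (v i) * Y i N) = cnj s"
    unfolding s_def by (simp add: psd_fun_last_herm[OF psd] mult.commute)
  have cP: "cnj P = P"
    using psd_fun_diag[OF psd, of N] unfolding P_def by (simp add: complex_eq_iff)
  have "quad_form N (schur_compl N Y) v
      = quad_form N Y v - (\<Sum>i<N. \<Sum>j<N. (cnj (v i) * Y i N) * (Y N j * v j) / P)"
    unfolding quad_form_def schur_compl_def P_def by (simp add: algebra_simps sum_subtractf)
  also have "(\<Sum>i<N. \<Sum>j<N. (cnj (v i) * Y i N) * (Y N j * v j) / P)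
      = (\<Sum>i<N. cnj (v i) * Y i N) * s / P"
    unfolding s_def by (simp add: sum_product sum_divide_distrib)
  also have "\<dots> = cnj s * s / P"
    using col by simp
  finally have schur: "quad_form N (schur_compl N Y) v = quad_form N Y v - cnj s * s / P" .
  \<comment> \<open>the minimising extension of v by the last coordinate\<close>
  define t where "t = - s / P"
  have "quad_form (Suc N) Y (\<lambda>x. if x < N then v x else t)
      = quad_form N Y v + cnj s * t + cnj t * s + cnj t * P * t"
    using quad_form_extend[of N Y v t] col unfolding s_def P_def by simp
  also have "\<dots> = quad_form N (schur_compl N Y) v"
    unfolding schur t_def using cP by (cases "P = 0") (simp_all add: field_simps)
  finally show "Im (quad_form N (schur_compl N Y) v) = 0 \<and> 0 \<le> Re (quad_form N (schur_compl N Y) v)"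
    using psd[unfolded psd_fun_def, rule_format, of "\<lambda>x. if x < N then v x else t"] by simp
qed

lemma psd_fun_schur_split:
  assumes psd: "psd_fun (Suc N) Y" and i: "i < Suc N" and j: "j < Suc N"
  shows "Y i j = (if i < N \<and> j < N then schur_compl N Y i j else 0) + cnj (Y N i) * Y N j / Y N N"
proof -
  have herm: "\<And>i. i < N \<Longrightarrow> Y i N = cnj (Y N i)" using psd_fun_last_herm[OF psd] .
  have cP: "cnj (Y N N) = Y N N"
    using psd_fun_diag[OF psd, of N] by (simp add: complex_eq_iff)
  consider "i < N" "j < N" | "i = N" | "j = N" "i < N" using i j by linarith
  then show ?thesis
  proof cases
    case 1
    then show ?thesis unfolding schur_compl_def by (simp add: herm)
  next
    case 2
    then show ?thesis
      using psd_fun_last_row_zero[OF psd] cP j by (cases "Y N N = 0") (auto simp: less_Suc_eq)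
  next
    case 3
    then show ?thesis
      using psd_fun_last_row_zero[OF psd] herm by (cases "Y N N = 0") auto
  qed
qed

lemma psd_fun_gram:
  "psd_fun N Y \<Longrightarrow> \<exists>U (R::nat). \<forall>i<N. \<forall>j<N. Y i j = (\<Sum>t<R. cnj (U t i) * U t j)"
proof (induction N arbitrary: Y)
  case 0
  then show ?case by auto
next
  case (Suc N)
  obtain U and R :: nat
    where U: "\<forall>i<N. \<forall>j<N. schur_compl N Y i j = (\<Sum>t<R. cnj (U t i) * U t j)"
    using Suc.IH[OF psd_fun_schur_compl[OF Suc.prems]] by blast
  define sq where "sq = complex_of_real (sqrt (Re (Y N N)))"
  have sq: "sq * sq = Y N N" "cnj sq = sq"
    using psd_fun_diag[OF Suc.prems, of N] unfolding sq_def
    by (simp_all add: complex_eq_iff flip: of_real_mult)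
  define U' where "U' = (\<lambda>t i. if t < R then (if i < N then U t i else 0) else Y N i / sq)"
  have "Y i j = (\<Sum>t<Suc R. cnj (U' t i) * U' t j)" if "i < Suc N" "j < Suc N" for i j
  proof -
    have "(\<Sum>t<R. cnj (U' t i) * U' t j) = (if i < N \<and> j < N then schur_compl N Y i j else 0)"
      using U unfolding U'_def by auto
    moreover have "cnj (U' R i) * U' R j = cnj (Y N i) * Y N j / Y N N"
      unfolding U'_def using sq by (simp add: field_simps)
    ultimately show ?thesis
      using psd_fun_schur_split[OF Suc.prems that] by simp
  qed
  then show ?case by blast
qed

section \<open>Block matrices and the Choi matrix\<close>

lemma ampl_cong:
  assumes "\<And>i j. i < k \<Longrightarrow> j < k \<Longrightarrow> B i j = B' i j"
  shows "ampl k n B = ampl k n B'"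
  unfolding ampl_def
proof (rule eq_matI)
  fix r c assume "r < dim_row (mat (k * n) (k * n) (\<lambda>(r, c). B' (r div n) (c div n) $$ (r mod n, c mod n)))"
    and "c < dim_col (mat (k * n) (k * n) (\<lambda>(r, c). B' (r div n) (c div n) $$ (r mod n, c mod n)))"
  moreover from this have "r div n < k" "c div n < k" by (simp_all add: less_mult_imp_div_less)
  ultimately show "mat (k * n) (k * n) (\<lambda>(r, c). B (r div n) (c div n) $$ (r mod n, c mod n)) $$ (r, c) =
         mat (k * n) (k * n) (\<lambda>(r, c). B' (r div n) (c div n) $$ (r mod n, c mod n)) $$ (r, c)"
    using assms by simp
qed auto

lemma psd_ampl_0: "psd (ampl 0 m B)"
  unfolding psd_def ampl_def by auto

lemma block_index_less:
  fixes i k a l :: nat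
  assumes "i < k" "a < l"
  shows "i * l + a < k * l"
proof -
  have "i * l + a < Suc i * l" using assms by simp
  also have "\<dots> \<le> k * l" using assms by (intro mult_le_mono1) simp
  finally show ?thesis .
qed

lemma cnj_mult_self_nonneg: "Im (cnj z * z) = 0 \<and> 0 \<le> Re (cnj z * z)"
  by (simp add: mult.commute[of "cnj z"] complex_mult_cnj)

text \<open>The Choi matrix \<Sum>_ij E_ij \<otimes> E_ij = w w^*, where w = \<Sum>_i e_i \<otimes> e_i.\<close>
definition choi :: "nat \<Rightarrow> complex mat" where
  "choi l = mat (l * l) (l * l) (\<lambda>(r, c). if r div l = r mod l \<and> c div l = c mod l then 1 else 0)"

lemma blk_choi:
  assumes "i < l" "j < l" "a < l" "b < l"
  shows "blk l (choi l) i j $$ (a, b) = (if a = i \<and> b = j then 1 else 0)"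
  using assms block_index_less[of i l a] block_index_less[of j l b]
  unfolding blk_def choi_def by auto

lemma psd_choi: "psd (choi l)"
  unfolding psd_def Let_def
proof (intro conjI ballI)
  show "choi l \<in> carrier_mat (dim_row (choi l)) (dim_row (choi l))"
    unfolding choi_def by simp
  fix v :: "complex vec"
  define w where "w = (\<lambda>r. if r div l = r mod l then v $ r else 0)"
  have "(\<Sum>i<dim_row (choi l). \<Sum>j<dim_row (choi l). cnj (v $ i) * choi l $$ (i, j) * v $ j)
      = (\<Sum>i<l*l. \<Sum>j<l*l. cnj (w i) * w j)"
    unfolding choi_def w_def by (intro sum.cong refl) auto
  also have "\<dots> = cnj (\<Sum>i<l*l. w i) * (\<Sum>j<l*l. w j)"
    by (simp add: sum_product)
  finally have eq: "(\<Sum>i<dim_row (choi l). \<Sum>j<dim_row (choi l). cnj (v $ i) * choi l $$ (i, j) * v $ j)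
      = cnj (\<Sum>i<l*l. w i) * (\<Sum>j<l*l. w j)" .
  show "Im (\<Sum>i<dim_row (choi l). \<Sum>j<dim_row (choi l). cnj (v $ i) * choi l $$ (i, j) * v $ j) = 0"
    "0 \<le> Re (\<Sum>i<dim_row (choi l). \<Sum>j<dim_row (choi l). cnj (v $ i) * choi l $$ (i, j) * v $ j)"
    unfolding eq using cnj_mult_self_nonneg by blast+
qed

lemma k_pos_mat_choi:
  "k_pos_mat l l m \<Phi> \<Longrightarrow> psd (ampl l m (\<lambda>i j. \<Phi> (blk l (choi l) i j)))"
  unfolding k_pos_mat_def using psd_choi by (simp add: choi_def)

section \<open>Matrix cones of an operator system\<close>

lemma os_vector_space: "operator_system smul star C e \<Longrightarrow> vector_space smul"
  unfolding operator_system_def by (elim conjE) assumption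

lemma os_cone_add:
  assumes "operator_system smul star C e" "1 \<le> l" "X \<in> C l" "Y \<in> C l"
  shows "(\<lambda>i j. X i j + Y i j) \<in> C l"
proof -
  from assms(1) have "\<forall>l\<ge>1. \<forall>X\<in>C l. \<forall>Y\<in>C l. (\<lambda>i j. X i j + Y i j) \<in> C l"
    unfolding operator_system_def by (elim conjE) assumption
  with assms(2-) show ?thesis by blast
qed

lemma os_cone_compress:
  assumes "operator_system smul star C e" "1 \<le> p" "1 \<le> l" "X \<in> C p"
  shows "(\<lambda>i j. if i < l \<and> j < l
      then (\<Sum>a<p. \<Sum>b<p. smul (cnj (\<alpha> a i) * \<alpha> b j) (X a b)) else 0) \<in> C l"
proof -
  from assms(1) have "\<forall>p\<ge>1. \<forall>l\<ge>1. \<forall>X\<in>C p. \<forall>\<alpha>::nat \<Rightarrow> nat \<Rightarrow> complex.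
        (\<lambda>i j. if i < l \<and> j < l
               then (\<Sum>a<p. \<Sum>b<p. smul (cnj (\<alpha> a i) * \<alpha> b j) (X a b)) else 0) \<in> C l"
    unfolding operator_system_def by (elim conjE) assumption
  with assms(2-) show ?thesis by blast
qed

lemma os_zero_in_cone:
  assumes os: "operator_system smul star C e" and l: "1 \<le> l"
  shows "(\<lambda>i j. 0) \<in> C l"
proof -
  from os have star_add: "\<forall>x y. star (x + y) = star x + star y"
    unfolding operator_system_def by (elim conjE) assumption
  from os have scale: "\<forall>l\<ge>1. \<forall>X\<in>C l. \<forall>r::real. 0 \<le> r \<longrightarrow> (\<lambda>i j. smul (complex_of_real r) (X i j)) \<in> C l"
    unfolding operator_system_def by (elim conjE) assumption
  from os have archimedean: "\<forall>l\<ge>1. \<forall>X\<in>herm star l. \<exists>r>0. shift smul e l r X \<in> C l"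
    unfolding operator_system_def by (elim conjE) assumption
  interpret vector_space smul by (rule os_vector_space[OF os])
  have "star 0 + star 0 = star 0" using star_add by (metis add.right_neutral)
  then have "(\<lambda>i j. 0) \<in> herm star l" unfolding herm_def vmat_def by simp
  then obtain X where "X \<in> C l" using archimedean l by blast
  then have "(\<lambda>i j. smul (complex_of_real 0) (X i j)) \<in> C l" using scale l by blast
  then show ?thesis by simp
qed

lemma os_cone_sum:
  assumes os: "operator_system smul star C e" and l: "1 \<le> l" and W: "\<And>t. t < (R::nat) \<Longrightarrow> W t \<in> C l"
  shows "(\<lambda>i j. \<Sum>t<R. W t i j) \<in> C l"
  using W
proof (induction R)
  case 0
  then show ?case using os_zero_in_cone[OF os l] by simp
next
  case (Suc R)
  have "(\<lambda>i j. (\<Sum>t<R. W t i j) + W R i j) \<in> C l"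
    using os_cone_add[OF os l] Suc by simp
  then show ?case by simp
qed

definition mat_pairing ::
  "(complex \<Rightarrow> 'a \<Rightarrow> 'a::ab_group_add) \<Rightarrow> nat \<Rightarrow> (nat \<Rightarrow> nat \<Rightarrow> 'a) \<Rightarrow> complex mat \<Rightarrow> 'a" where
  "mat_pairing smul l X A = (\<Sum>a<l. \<Sum>b<l. smul (A $$ (a, b)) (X a b))"

lemma lin_mat_map_pairing:
  assumes vs: "vector_space smul" and \<phi>: "lin_os_map smul n \<phi>"
  shows "lin_mat_map l n (\<phi> \<circ> mat_pairing smul l X)"
proof -
  interpret vector_space smul by (rule vs)
  have "mat_pairing smul l X (A + B) = mat_pairing smul l X A + mat_pairing smul l X B"
    if "A \<in> carrier_mat l l" "B \<in> carrier_mat l l" for A B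
    using that unfolding mat_pairing_def by (simp add: scale_left_distrib sum.distrib)
  moreover have "mat_pairing smul l X (c \<cdot>\<^sub>m A) = smul c (mat_pairing smul l X A)"
    if "A \<in> carrier_mat l l" for A c
    using that unfolding mat_pairing_def by (simp add: scale_sum_right)
  ultimately show ?thesis
    using \<phi> unfolding lin_mat_map_def lin_os_map_def by simp
qed

lemma mat_pairing_blk_choi:
  assumes vs: "vector_space smul" and i: "i < l" and j: "j < l"
  shows "mat_pairing smul l X (blk l (choi l) i j) = X i j"
proof -
  interpret vector_space smul by (rule vs)
  have "mat_pairing smul l X (blk l (choi l) i j) = (\<Sum>a<l. \<Sum>b<l. if a = i \<and> b = j then X a b else 0)"
    unfolding mat_pairing_def using i j by (intro sum.cong refl) (simp add: blk_choi)
  also have "\<dots> = (\<Sum>a<l. if a = i then X a j else 0)"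
    using j by (intro sum.cong refl) auto
  also have "\<dots> = X i j" using i by simp
  finally show ?thesis .
qed

text \<open>With Y = \<Sum>_t u_t u_t^*, the blockwise image of Y is \<Sum>_t of the compressions of X by the
  l \<times> k matrices (u_t(i l + a))_ai.\<close>
lemma mat_pairing_psd_in_cone:
  assumes os: "operator_system smul star C e" and k: "1 \<le> k" and l: "1 \<le> l" and X: "X \<in> C l"
    and Y: "Y \<in> carrier_mat (k * l) (k * l)" "psd Y"
  shows "(\<lambda>i j. if i < k \<and> j < k then mat_pairing smul l X (blk l Y i j) else 0) \<in> C k"
proof -
  interpret vector_space smul by (rule os_vector_space[OF os])
  have "psd_fun (k * l) (\<lambda>i j. Y $$ (i, j))"
    using psd_imp_psd_fun[OF Y(2)] Y(1) by simp
  then obtain U and R :: nat where U: "\<forall>i<k*l. \<forall>j<k*l. Y $$ (i, j) = (\<Sum>t<R. cnj (U t i) * U t j)"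
    using psd_fun_gram by blast
  define W where "W = (\<lambda>t i j. if i < k \<and> j < k then
      (\<Sum>a<l. \<Sum>b<l. smul (cnj (U t (i * l + a)) * U t (j * l + b)) (X a b)) else 0)"
  have "W t \<in> C k" for t
    using os_cone_compress[OF os l k X, of "\<lambda>a i. U t (i * l + a)"] unfolding W_def .
  then have "(\<lambda>i j. \<Sum>t<R. W t i j) \<in> C k" by (rule os_cone_sum[OF os k])
  moreover have "(\<Sum>t<R. W t i j) = (if i < k \<and> j < k then mat_pairing smul l X (blk l Y i j) else 0)"
    for i j
  proof (cases "i < k \<and> j < k")
    case True
    have "mat_pairing smul l X (blk l Y i j) = (\<Sum>a<l. \<Sum>b<l.
        smul (\<Sum>t<R. cnj (U t (i * l + a)) * U t (j * l + b)) (X a b))"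
      unfolding mat_pairing_def blk_def using True
      by (intro sum.cong refl) (simp add: U block_index_less)
    also have "\<dots> = (\<Sum>t<R. \<Sum>a<l. \<Sum>b<l. smul (cnj (U t (i * l + a)) * U t (j * l + b)) (X a b))"
      by (simp add: scale_sum_left sum.swap[of _ "{..<R}"])
    finally show ?thesis unfolding W_def using True by simp
  next
    case False
    then show ?thesis unfolding W_def if_not_P[OF False] by simp
  qed
  ultimately show ?thesis by simp
qed

lemma k_pos_mat_pairing:
  assumes os: "operator_system smul star C e" and k: "1 \<le> k" and l: "1 \<le> l" and X: "X \<in> C l"
    and \<phi>: "k_pos_os C k n \<phi>"
  shows "k_pos_mat k l n (\<phi> \<circ> mat_pairing smul l X)"
  unfolding k_pos_mat_def
proof (intro ballI impI)
  fix Y assume "Y \<in> carrier_mat (k * l) (k * l)" "psd Y"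
  then have "(\<lambda>i j. if i < k \<and> j < k then mat_pairing smul l X (blk l Y i j) else 0) \<in> C k"
    by (rule mat_pairing_psd_in_cone[OF os k l X])
  then have "psd (ampl k n (\<lambda>i j. \<phi> (if i < k \<and> j < k then mat_pairing smul l X (blk l Y i j) else 0)))"
    by (rule bspec[OF \<phi>[unfolded k_pos_os_def]])
  moreover have "ampl k n (\<lambda>i j. \<phi> (if i < k \<and> j < k then mat_pairing smul l X (blk l Y i j) else 0))
      = ampl k n (\<lambda>i j. (\<phi> \<circ> mat_pairing smul l X) (blk l Y i j))"
    by (rule ampl_cong) simp
  ultimately show "psd (ampl k n (\<lambda>i j. (\<phi> \<circ> mat_pairing smul l X) (blk l Y i j)))" by simp
qed

theorem mainTheorem17:
  fixes smul :: "complex \<Rightarrow> 'a \<Rightarrow> 'a::ab_group_add"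
    and star :: "'a \<Rightarrow> 'a" and C :: "nat \<Rightarrow> (nat \<Rightarrow> nat \<Rightarrow> 'a) set" and e :: 'a
    and \<psi> :: "complex mat \<Rightarrow> complex mat" and \<phi> :: "'a \<Rightarrow> complex mat"
    and k n m :: nat
  assumes "operator_system smul star C e"
    and "1 \<le> k"
    and "k_PEB k n m \<psi>"
    and "lin_os_map smul n \<phi>"
    and "k_pos_os C k n \<phi>"
  shows "compl_pos_os C m (\<psi> \<circ> \<phi>)"
  unfolding compl_pos_os_def k_pos_os_def
proof (intro allI ballI)
  fix l X assume X: "X \<in> C l"
  show "psd (ampl l m (\<lambda>i j. (\<psi> \<circ> \<phi>) (X i j)))"
  proof (cases "l = 0")
    case True
    then show ?thesis using psd_ampl_0 by simp
  next
    case False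
    then have l: "1 \<le> l" by simp
    have vs: "vector_space smul" by (rule os_vector_space[OF assms(1)])
    have "k_pos_mat l l m (\<psi> \<circ> (\<phi> \<circ> mat_pairing smul l X))"
      using assms(3) l lin_mat_map_pairing[OF vs assms(4)] k_pos_mat_pairing[OF assms(1,2) l X assms(5)]
      unfolding k_PEB_def by blast
    then have "psd (ampl l m (\<lambda>i j. (\<psi> \<circ> (\<phi> \<circ> mat_pairing smul l X)) (blk l (choi l) i j)))"
      by (rule k_pos_mat_choi)
    moreover have "ampl l m (\<lambda>i j. (\<psi> \<circ> (\<phi> \<circ> mat_pairing smul l X)) (blk l (choi l) i j))
        = ampl l m (\<lambda>i j. (\<psi> \<circ> \<phi>) (X i j))"
      by (rule ampl_cong) (simp add: mat_pairing_blk_choi[OF vs])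
    ultimately show ?thesis by simp
  qed
qed

end
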